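(* Let $|\psi\rangle$ be a pure three-qubit state and let $\{i,j,k\}=\{A,B,C\}$. Then $S_{ij}>1$ (i.e. $\rho_{ij}$ violates the three-settings CJWR linear steering inequality) if and only if $\mathcal C_{ij}^2>\frac{\mathcal C_{ik}^2+\mathcal C_{jk}^2}{2}$.
   Context: For a two-qubit state $\rho$ let $t_{kl}=\mathrm{Tr}[\rho\,\sigma_k\otimes\sigma_l]$ ($\sigma_k$ Pauli matrices) and $S(\rho)=\sum_{k,l=1}^3 t_{kl}^2$; $\rho_{ij}$ is the reduced state of qubits $i,j$ of $|\psi\rangle$ and $S_{ij}=S(\rho_{ij})$. $\mathcal C_{ij}$ is the Wootters concurrence of $\rho_{ij}$: $\mathcal C(\rho)=\max\{0,\lambda_1-\lambda_2-\lambda_3-\lambda_4\}$, with $\lambda_1\ge\dots\ge\lambda_4$ the square roots of the eigenvalues of $\rho(\sigma_2\otimes\sigma_2)\rho^*(\sigma_2\otimes\sigma_2)$. The three-settings CJWR inequality $\frac1{\sqrt3}|\sum_{k=1}^3\langle A_k\otimes B_k\rangle|\le1$ (unit $\hat a_k$, orthonormal $\hat b_k$) has maximum $\sqrt{S(\rho)}$ over settings, so it is violated iff $S(\rho)>1$. *)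

theory Defs
  imports Complex_Main "Jordan_Normal_Form.Char_Poly"
begin

datatype qubit = QA | QB | QC

text \<open>A three-qubit pure state is given by its amplitudes psi a b c, a b c in {0,1},
  in the computational basis of qubits A, B, C (in this order).\<close>
definition normalized3 :: "(nat \<Rightarrow> nat \<Rightarrow> nat \<Rightarrow> complex) \<Rightarrow> bool" where
  "normalized3 psi \<longleftrightarrow> (\<Sum>a<2. \<Sum>b<2. \<Sum>c<2. (cmod (psi a b c))\<^sup>2) = 1"

definition amp :: "(nat \<Rightarrow> nat \<Rightarrow> nat \<Rightarrow> complex) \<Rightarrow> (qubit \<Rightarrow> nat) \<Rightarrow> complex" where
  "amp psi f = psi (f QA) (f QB) (f QC)"

text \<open>Reduced two-qubit state of qubits i (first factor) and j (second factor),
  tracing out the remaining qubit k; basis index of the 4x4 matrix is 2*x + y.\<close>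
definition reduced :: "(nat \<Rightarrow> nat \<Rightarrow> nat \<Rightarrow> complex) \<Rightarrow> qubit \<Rightarrow> qubit \<Rightarrow> qubit \<Rightarrow> complex mat" where
  "reduced psi i j k = mat 4 4 (\<lambda>(r, s).
     \<Sum>z<2. amp psi ((\<lambda>_. 0)(i := r div 2, j := r mod 2, k := z))
          * cnj (amp psi ((\<lambda>_. 0)(i := s div 2, j := s mod 2, k := z))))"

definition pauli :: "nat \<Rightarrow> complex mat" where
  "pauli k = (if k = 1 then mat_of_rows_list 2 [[0, 1], [1, 0]]
              else if k = 2 then mat_of_rows_list 2 [[0, -\<i>], [\<i>, 0]]
              else mat_of_rows_list 2 [[1, 0], [0, -1]])"

definition kron2 :: "complex mat \<Rightarrow> complex mat \<Rightarrow> complex mat" where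
  "kron2 X Y = mat 4 4 (\<lambda>(r, s). X $$ (r div 2, s div 2) * Y $$ (r mod 2, s mod 2))"

definition mtrace :: "complex mat \<Rightarrow> complex" where
  "mtrace M = (\<Sum>i<dim_row M. M $$ (i, i))"

text \<open>Correlation tensor t_kl = Tr[rho (sigma_k (x) sigma_l)] (real for a density matrix).\<close>
definition corr :: "complex mat \<Rightarrow> nat \<Rightarrow> nat \<Rightarrow> real" where
  "corr rho k l = Re (mtrace (rho * kron2 (pauli k) (pauli l)))"

definition Sval :: "complex mat \<Rightarrow> real" where
  "Sval rho = (\<Sum>k\<in>{1..3}. \<Sum>l\<in>{1..3}. (corr rho k l)\<^sup>2)"

text \<open>Eigenvalues (with algebraic multiplicity) of a 4x4 complex matrix, as a list;
  any choice gives the same multiset.\<close>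
definition eigvals4 :: "complex mat \<Rightarrow> complex list" where
  "eigvals4 M = (SOME es. length es = 4 \<and> char_poly M = (\<Prod>\<mu>\<leftarrow>es. [:-\<mu>, 1:]))"

definition concurrence :: "complex mat \<Rightarrow> real" where
  "concurrence rho =
    (let yy = kron2 (pauli 2) (pauli 2);
         R = rho * yy * map_mat cnj rho * yy;
         lam = rev (sort (map (\<lambda>\<mu>. sqrt (Re \<mu>)) (eigvals4 R)))
     in max 0 (lam ! 0 - lam ! 1 - lam ! 2 - lam ! 3))"

end

theory Submission
  imports Defs
begin

(* Tracing out one qubit of a pure three-qubit state leaves a rank-two state
   rho = p p^* + q q^*. By Sylvester's determinant identity the spin-flipped matrix
   rho Y conj(rho) Y, with Y = sigma_2 (x) sigma_2, has the nonzero spectrum of conj(W) W,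
   where W is the symmetric 2x2 Gram matrix of p, q for the bilinear form x^T Y y.
   Hence C(rho)^2 = |W|^2 - 2 |det W| (Frobenius norm), and det W is minus Cayley's
   hyperdeterminant of the state, so it is the same for all three cuts.
   On the other side, completeness of the Pauli basis gives
   S(rho) = 4 Tr rho^2 - 2 Tr rho_A^2 - 2 Tr rho_B^2 + (Tr rho)^2, and a polynomial identity
   in the amplitudes turns S_ij - 1 into 2 |W_ij|^2 - |W_ik|^2 - |W_jk|^2,
   which is 2 C_ij^2 - C_ik^2 - C_jk^2. *)

lemma sum_lessThan_2: "(\<Sum>k<(2::nat). f k) = f 0 + (f 1 :: 'a :: comm_monoid_add)"
  by (simp add: eval_nat_numeral)

lemma sum_lessThan_4: "(\<Sum>k<(4::nat). f k) = f 0 + f 1 + f 2 + (f 3 :: 'a :: comm_monoid_add)"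
  by (simp add: eval_nat_numeral add.assoc)

lemma mat_times_mat: "mat n m f * mat m p g = mat n p (\<lambda>(i, j). \<Sum>k<m. f (i, k) * g (k, j))"
  by (rule eq_matI) (auto simp: scalar_prod_def lessThan_atLeast0 intro!: sum.cong)

lemma assoc_mult_mat_dim:
  fixes A B C :: "'a :: comm_ring_1 mat"
  assumes "dim_col A = dim_row B" and "dim_col B = dim_row C"
  shows "A * B * C = A * (B * C)"
  using assms by (intro assoc_mult_mat[of _ "dim_row A" "dim_row B" _ "dim_row C" _ "dim_col C"])
    (auto intro: carrier_matI)

lemma det_mat2: "det (mat 2 2 f) = f (0, 0) * f (1, 1) - f (0, 1) * (f (1, 0) :: 'a :: comm_ring_1)"
proof -
  have "det (mat 2 2 f) = (\<Sum>j<2. mat 2 2 f $$ (0, j) * cofactor (mat 2 2 f) 0 j)"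
    by (rule laplace_expansion_row) auto
  also have "\<dots> = f (0, 0) * f (1, 1) - f (0, 1) * f (1, 0)"
    by (simp add: sum_lessThan_2 cofactor_def det_single mat_delete_def)
  finally show ?thesis .
qed

lemma poly_char_poly:
  assumes "(A :: 'a :: field mat) \<in> carrier_mat n n"
  shows "poly (char_poly A) k = det (k \<cdot>\<^sub>m 1\<^sub>m n - A)"
proof -
  have "- char_matrix A k = k \<cdot>\<^sub>m 1\<^sub>m n - A"
    using assms by (intro eq_matI) (auto simp: char_matrix_def)
  then show ?thesis using char_poly_matrix[OF assms] by simp
qed

lemma char_poly_mat2:
  "char_poly (mat 2 2 f) = [: f (0, 0) * f (1, 1) - f (0, 1) * f (1, 0), - (f (0, 0) + f (1, 1)), 1 :]"
  for f :: "nat \<times> nat \<Rightarrow> 'a :: {field, ring_char_0}"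
proof -
  have "poly (char_poly (mat 2 2 f)) k
      = poly [: f (0, 0) * f (1, 1) - f (0, 1) * f (1, 0), - (f (0, 0) + f (1, 1)), 1 :] k" for k
  proof -
    have "k \<cdot>\<^sub>m 1\<^sub>m 2 - mat 2 2 f = mat 2 2 (\<lambda>(i, j). (if i = j then k else 0) - f (i, j))"
      by (rule eq_matI) auto
    then show ?thesis by (simp add: poly_char_poly[of _ 2] det_mat2 algebra_simps)
  qed
  then show ?thesis by (simp add: poly_eq_poly_eq_iff[symmetric] fun_eq_iff)
qed

text \<open>Sylvester's determinant identity: factor the block matrix \<open>[[k I, A], [B, I]]\<close>
  in two ways.\<close>
lemma det_scalar_minus_mult_commute:
  fixes A B :: "'a :: field mat"
  assumes A: "A \<in> carrier_mat n m" and B: "B \<in> carrier_mat m n"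
  shows "k ^ m * det (k \<cdot>\<^sub>m 1\<^sub>m n - A * B) = k ^ n * det (k \<cdot>\<^sub>m 1\<^sub>m m - B * A)"
proof -
  define Z where "Z = four_block_mat (k \<cdot>\<^sub>m 1\<^sub>m n) A B (1\<^sub>m m)"
  define L where "L = four_block_mat (1\<^sub>m n) (0\<^sub>m n m) (- B) (k \<cdot>\<^sub>m 1\<^sub>m m)"
  define U where "U = four_block_mat (1\<^sub>m n) (0\<^sub>m n m) (- B) (1\<^sub>m m)"
  have Z: "Z \<in> carrier_mat (n + m) (n + m)" and L: "L \<in> carrier_mat (n + m) (n + m)"
    and U: "U \<in> carrier_mat (n + m) (n + m)"
    unfolding Z_def L_def U_def using A B by auto
  have LZ: "L * Z = four_block_mat (k \<cdot>\<^sub>m 1\<^sub>m n) A (0\<^sub>m m n) (k \<cdot>\<^sub>m 1\<^sub>m m - B * A)"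
    unfolding L_def Z_def using A B
    by (subst mult_four_block_mat[of _ n n _ m _ m])
      (auto intro!: cong_four_block_mat simp: algebra_simps)
  have ZU: "Z * U = four_block_mat (k \<cdot>\<^sub>m 1\<^sub>m n - A * B) A (0\<^sub>m m n) (1\<^sub>m m)"
    unfolding U_def Z_def using A B
    by (subst mult_four_block_mat[of _ n n _ m _ m])
      (auto intro!: cong_four_block_mat simp: algebra_simps)
  have "k ^ m * det Z = k ^ n * det (k \<cdot>\<^sub>m 1\<^sub>m m - B * A)"
  proof -
    have "det L = k ^ m" unfolding L_def using A B
      by (subst det_four_block_mat_upper_right_zero[of _ n _ m]) auto
    moreover have "det (L * Z) = k ^ n * det (k \<cdot>\<^sub>m 1\<^sub>m m - B * A)"
      unfolding LZ using A B by (subst det_four_block_mat_lower_left_zero[of _ n _ m]) auto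
    ultimately show ?thesis using det_mult[OF L Z] by simp
  qed
  moreover have "det Z = det (k \<cdot>\<^sub>m 1\<^sub>m n - A * B)"
  proof -
    have "det U = 1" unfolding U_def using A B
      by (subst det_four_block_mat_upper_right_zero[of _ n _ m]) auto
    moreover have "det (Z * U) = det (k \<cdot>\<^sub>m 1\<^sub>m n - A * B)"
      unfolding ZU using A B by (subst det_four_block_mat_lower_left_zero[of _ n _ m]) auto
    ultimately show ?thesis using det_mult[OF Z U] by simp
  qed
  ultimately show ?thesis by simp
qed

lemma char_poly_mult_commute:
  fixes A B :: "'a :: {field, ring_char_0} mat"
  assumes A: "A \<in> carrier_mat n m" and B: "B \<in> carrier_mat m n"
  shows "monom 1 m * char_poly (A * B) = monom 1 n * char_poly (B * A)"
proof -
  have "poly (monom 1 m * char_poly (A * B)) k = poly (monom 1 n * char_poly (B * A)) k" for k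
    using det_scalar_minus_mult_commute[OF A B, of k] A B
    by (simp add: poly_monom poly_char_poly[of _ n] poly_char_poly[of _ m])
  then show ?thesis by (simp add: poly_eq_poly_eq_iff[symmetric] fun_eq_iff)
qed

lemma order_prod_list_linear:
  "order x (\<Prod>\<mu>\<leftarrow>es. [:- \<mu>, 1:]) = count (mset es) (x :: 'a :: idom)"
proof (induction es)
  case Nil
  show ?case using order_0I[of 1 x] by simp
next
  case (Cons a es)
  have "(\<Prod>\<mu>\<leftarrow>es. [:- \<mu>, 1:]) \<noteq> (0 :: 'a poly)"
    by (auto simp: prod_list_zero_iff)
  then have "order x ([:- a, 1:] * (\<Prod>\<mu>\<leftarrow>es. [:- \<mu>, 1:]))
      = order x [:- a, 1:] + order x (\<Prod>\<mu>\<leftarrow>es. [:- \<mu>, 1:])"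
    by (intro order_mult) (simp del: mult_pCons_left)
  then show ?case using Cons by (simp add: order_linear')
qed

lemma mset_eigvals4:
  assumes "length es = 4" and "char_poly M = (\<Prod>\<mu>\<leftarrow>es. [:- \<mu>, 1:])"
  shows "mset (eigvals4 M) = mset es"
proof (rule multiset_eqI)
  fix x
  have "char_poly M = (\<Prod>\<mu>\<leftarrow>eigvals4 M. [:- \<mu>, 1:])"
    unfolding eigvals4_def by (rule someI2[of _ es]) (use assms in auto)
  then show "count (mset (eigvals4 M)) x = count (mset es) x"
    using assms(2) by (metis order_prod_list_linear)
qed

lemma nonneg_quadratic_roots:
  fixes e1 e2 :: real
  assumes "0 \<le> e2" and "4 * e2 \<le> e1\<^sup>2" and "0 \<le> e1"
  obtains m1 m2 where "m1 + m2 = e1" "m1 * m2 = e2" "0 \<le> m2" "m2 \<le> m1"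
proof -
  define d where "d = sqrt (e1\<^sup>2 - 4 * e2)"
  have d_sq: "d\<^sup>2 = e1\<^sup>2 - 4 * e2"
    unfolding d_def using assms(2) by (intro real_sqrt_pow2) simp
  have "d \<le> sqrt (e1\<^sup>2)"
    unfolding d_def using assms(1) by (intro real_sqrt_le_mono) simp
  with assms(3) have "d \<le> e1" by simp
  moreover have "0 \<le> d" using assms(2) by (simp add: d_def)
  moreover have "(e1 + d) / 2 * ((e1 - d) / 2) = e2"
    using d_sq by (simp add: field_simps power2_eq_square)
  ultimately show thesis by (intro that[of "(e1 + d) / 2" "(e1 - d) / 2"]) (auto simp: field_simps)
qed

lemma concurrence_eq_of_char_poly:
  fixes m1 m2 :: real
  assumes "char_poly (\<rho> * kron2 (pauli 2) (pauli 2) * map_mat cnj \<rho> * kron2 (pauli 2) (pauli 2))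
      = monom 1 2 * [: of_real (m1 * m2), - of_real (m1 + m2), 1 :]"
    and "0 \<le> m2" and "m2 \<le> m1"
  shows "concurrence \<rho> = sqrt m1 - sqrt m2"
proof -
  let ?R = "\<rho> * kron2 (pauli 2) (pauli 2) * map_mat cnj \<rho> * kron2 (pauli 2) (pauli 2)"
  have "poly (monom 1 2 * [: of_real (m1 * m2), - of_real (m1 + m2), 1 :]) x
      = poly (\<Prod>\<mu>\<leftarrow>[of_real m1, of_real m2, 0, 0]. [:- \<mu>, 1:]) x" for x :: complex
    by (simp add: poly_monom algebra_simps power2_eq_square)
  then have "char_poly ?R = (\<Prod>\<mu>\<leftarrow>[of_real m1, of_real m2, 0, 0]. [:- \<mu>, 1:])"
    unfolding assms(1) by (simp add: poly_eq_poly_eq_iff[symmetric] fun_eq_iff)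
  then have "mset (eigvals4 ?R) = mset [of_real m1, of_real m2, 0, 0]"
    by (intro mset_eigvals4) simp_all
  then have "mset (map (\<lambda>\<mu>. sqrt (Re \<mu>)) (eigvals4 ?R)) = mset [0, 0, sqrt m2, sqrt m1]"
    by (simp add: mset_map add_mset_commute)
  then have "sort (map (\<lambda>\<mu>. sqrt (Re \<mu>)) (eigvals4 ?R)) = [0, 0, sqrt m2, sqrt m1]"
    by (rule properties_for_sort[OF sym]) (use assms(2,3) in simp)
  then show ?thesis
    using assms(2,3) by (simp add: concurrence_def Let_def)
qed

lemma kron2_pauli2_pauli2:
  "kron2 (pauli 2) (pauli 2)
    = mat 4 4 (\<lambda>(r, s). if r + s = 3 then if r = 0 \<or> r = 3 then -1 else 1 else 0)"
  (is "_ = mat 4 4 ?Y")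
proof (rule eq_matI)
  fix r s assume "r < dim_row (mat 4 4 ?Y)" and "s < dim_col (mat 4 4 ?Y)"
  then have "r \<in> {0, 1, 2, 3}" and "s \<in> {0, 1, 2, 3}" by auto
  then show "kron2 (pauli 2) (pauli 2) $$ (r, s) = mat 4 4 ?Y $$ (r, s)"
    by (auto simp: kron2_def pauli_def mat_of_rows_list_def)
qed (simp_all add: kron2_def)

text \<open>The bilinear form \<open>x\<^sup>T (\<sigma>\<^sub>2 \<otimes> \<sigma>\<^sub>2) y\<close>; Wootters' spin flip is
  \<open>\<psi> \<mapsto> (\<sigma>\<^sub>2 \<otimes> \<sigma>\<^sub>2) conj \<psi>\<close>.\<close>
definition flip_form :: "(nat \<Rightarrow> complex) \<Rightarrow> (nat \<Rightarrow> complex) \<Rightarrow> complex" where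
  "flip_form x y = - x 0 * y 3 + x 1 * y 2 + x 2 * y 1 - x 3 * y 0"

definition flip_gram :: "(nat \<Rightarrow> complex) \<Rightarrow> (nat \<Rightarrow> complex) \<Rightarrow> complex mat" where
  "flip_gram p q = mat 2 2 (\<lambda>(z, z'). flip_form (if z = 0 then p else q) (if z' = 0 then p else q))"

definition flip_gram_norm :: "(nat \<Rightarrow> complex) \<Rightarrow> (nat \<Rightarrow> complex) \<Rightarrow> real" where
  "flip_gram_norm p q =
    (cmod (flip_form p p))\<^sup>2 + 2 * (cmod (flip_form p q))\<^sup>2 + (cmod (flip_form q q))\<^sup>2"

definition flip_gram_det :: "(nat \<Rightarrow> complex) \<Rightarrow> (nat \<Rightarrow> complex) \<Rightarrow> complex" where
  "flip_gram_det p q = flip_form p p * flip_form q q - (flip_form p q)\<^sup>2"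

definition rank2_density :: "(nat \<Rightarrow> complex) \<Rightarrow> (nat \<Rightarrow> complex) \<Rightarrow> complex mat" where
  "rank2_density p q = mat 4 4 (\<lambda>(r, s). p r * cnj (p s) + q r * cnj (q s))"

lemma flip_form_sym: "flip_form x y = flip_form y x"
  by (simp add: flip_form_def algebra_simps)

text \<open>With \<open>V = [p q]\<close> we have \<open>\<rho> = V V\<^sup>*\<close>, so \<open>\<rho> Y conj \<rho> Y = V M\<close> and
  \<open>M V = conj W * W\<close> for the flip Gram matrix \<open>W = V\<^sup>T Y V\<close>.\<close>
lemma char_poly_spin_flip_rank2_density:
  fixes p q :: "nat \<Rightarrow> complex"
  defines "\<rho> \<equiv> rank2_density p q" and "Y \<equiv> kron2 (pauli 2) (pauli 2)"
  shows "char_poly (\<rho> * Y * map_mat cnj \<rho> * Y)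
    = monom 1 2 * char_poly (map_mat cnj (flip_gram p q) * flip_gram p q)"
proof -
  define v where "v z = (if z = 0 then p else q)" for z :: nat
  define V where "V = mat 4 2 (\<lambda>(r, z). v z r)"
  define Vh where "Vh = mat 2 4 (\<lambda>(z, r). cnj (v z r))"
  define Vc where "Vc = mat 4 2 (\<lambda>(r, z). cnj (v z r))"
  define Vt where "Vt = mat 2 4 (\<lambda>(z, r). v z r)"
  define M where "M = Vh * Y * Vc * Vt * Y"
  have dims: "dim_row V = 4" "dim_col V = 2" "dim_row Vh = 2" "dim_col Vh = 4"
    "dim_row Vc = 4" "dim_col Vc = 2" "dim_row Vt = 2" "dim_col Vt = 4"
    "dim_row Y = 4" "dim_col Y = 4"
    by (simp_all add: V_def Vh_def Vc_def Vt_def Y_def kron2_def)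
  have "\<rho> = V * Vh"
    unfolding \<rho>_def rank2_density_def V_def Vh_def mat_times_mat
    by (rule cong_mat) (simp_all add: sum_lessThan_2 v_def)
  moreover have "map_mat cnj \<rho> = Vc * Vt"
    unfolding \<rho>_def rank2_density_def Vc_def Vt_def mat_times_mat
    by (rule eq_matI) (auto simp: sum_lessThan_2 v_def)
  ultimately have R: "\<rho> * Y * map_mat cnj \<rho> * Y = V * M"
    unfolding M_def by (simp add: assoc_mult_mat_dim dims)
  have W: "Vt * Y * V = flip_gram p q"
    unfolding Vt_def V_def Y_def kron2_pauli2_pauli2 flip_gram_def mat_times_mat
    by (rule cong_mat) (auto simp: sum_lessThan_4 v_def flip_form_def algebra_simps)
  have W_cnj: "Vh * Y * Vc = map_mat cnj (flip_gram p q)"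
    unfolding Vh_def Vc_def Y_def kron2_pauli2_pauli2 flip_gram_def mat_times_mat
    by (rule eq_matI) (auto simp: sum_lessThan_4 v_def flip_form_def algebra_simps)
  have "M * V = (Vh * Y * Vc) * (Vt * Y * V)"
    unfolding M_def by (simp add: assoc_mult_mat_dim dims)
  also have "\<dots> = map_mat cnj (flip_gram p q) * flip_gram p q"
    unfolding W W_cnj ..
  finally have MV: "M * V = map_mat cnj (flip_gram p q) * flip_gram p q" .
  have "monom 1 2 * char_poly (V * M) = monom 1 4 * char_poly (M * V)"
    by (rule char_poly_mult_commute[of V 4 2 M]) (simp_all add: carrier_matI M_def dims)
  then have "monom 1 2 * char_poly (V * M) = monom 1 2 * (monom 1 2 * char_poly (M * V))"
    by (simp add: mult_monom flip: mult.assoc)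
  then show ?thesis
    unfolding R MV by (simp add: monom_eq_0_iff)
qed

lemma char_poly_flip_gram:
  "char_poly (map_mat cnj (flip_gram p q) * flip_gram p q)
    = [: of_real ((cmod (flip_gram_det p q))\<^sup>2), - of_real (flip_gram_norm p q), 1 :]"
proof -
  define a b c where "a = flip_form p p" and "b = flip_form p q" and "c = flip_form q q"
  define g :: "nat \<times> nat \<Rightarrow> complex"
    where "g = (\<lambda>(z, z'). flip_form (if z = 0 then p else q) (if z' = 0 then p else q))"
  have g: "g (0, 0) = a" "g (0, 1) = b" "g (1, 0) = b" "g (1, 1) = c"
    by (simp_all add: g_def a_def b_def c_def flip_form_sym)
  have "map_mat cnj (flip_gram p q) = mat 2 2 (\<lambda>x. cnj (g x))"
    unfolding flip_gram_def g_def by (rule eq_matI) auto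
  then have "map_mat cnj (flip_gram p q) * flip_gram p q
      = mat 2 2 (\<lambda>(z, z'). \<Sum>k<2. cnj (g (z, k)) * g (k, z'))"
    unfolding flip_gram_def g_def[symmetric] by (simp add: mat_times_mat)
  then have "char_poly (map_mat cnj (flip_gram p q) * flip_gram p q)
      = [: (cnj a * a + cnj b * b) * (cnj b * b + cnj c * c)
             - (cnj a * b + cnj b * c) * (cnj b * a + cnj c * b),
           - ((cnj a * a + cnj b * b) + (cnj b * b + cnj c * c)), 1 :]"
    by (simp add: char_poly_mat2 sum_lessThan_2 g g[unfolded One_nat_def])
  also have "(cnj a * a + cnj b * b) * (cnj b * b + cnj c * c)
        - (cnj a * b + cnj b * c) * (cnj b * a + cnj c * b)
      = cnj (a * c - b\<^sup>2) * (a * c - b\<^sup>2)"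
    by (simp add: power2_eq_square algebra_simps)
  also have "\<dots> = of_real ((cmod (flip_gram_det p q))\<^sup>2)"
    by (simp only: complex_norm_square flip_gram_det_def a_def b_def c_def mult.commute)
  also have "- ((cnj a * a + cnj b * b) + (cnj b * b + cnj c * c)) = - of_real (flip_gram_norm p q)"
    by (simp only: flip_gram_norm_def a_def b_def c_def of_real_add of_real_mult
        of_real_numeral complex_norm_square) (simp add: algebra_simps)
  finally show ?thesis .
qed

lemma concurrence_sq_rank2_density:
  "(concurrence (rank2_density p q))\<^sup>2 = flip_gram_norm p q - 2 * cmod (flip_gram_det p q)"
proof -
  let ?a = "flip_form p p" and ?b = "flip_form p q" and ?c = "flip_form q q"
  let ?D = "cmod (flip_gram_det p q)" and ?e = "flip_gram_norm p q"
  have "?D \<le> cmod ?a * cmod ?c + (cmod ?b)\<^sup>2"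
    unfolding flip_gram_det_def by (metis norm_triangle_ineq4 norm_mult norm_power)
  moreover have "2 * (cmod ?a * cmod ?c) \<le> (cmod ?a)\<^sup>2 + (cmod ?c)\<^sup>2"
    using sum_squares_bound[of "cmod ?a" "cmod ?c"] by (simp add: power2_eq_square)
  ultimately have "2 * ?D \<le> ?e" unfolding flip_gram_norm_def by linarith
  then have "4 * ?D\<^sup>2 \<le> ?e\<^sup>2"
    using power_mono[of "2 * ?D" ?e 2] by (simp add: power_mult_distrib)
  moreover have "0 \<le> ?e" by (simp add: flip_gram_norm_def)
  ultimately obtain m1 m2 where m: "m1 + m2 = ?e" "m1 * m2 = ?D\<^sup>2" "0 \<le> m2" "m2 \<le> m1"
    using nonneg_quadratic_roots[of "?D\<^sup>2" ?e] by auto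
  have "concurrence (rank2_density p q) = sqrt m1 - sqrt m2"
    by (rule concurrence_eq_of_char_poly)
      (use m in \<open>simp_all add: char_poly_spin_flip_rank2_density char_poly_flip_gram\<close>)
  then have "(concurrence (rank2_density p q))\<^sup>2 = m1 + m2 - 2 * sqrt (m1 * m2)"
    using m(3,4) by (simp add: power2_diff real_sqrt_mult)
  then show ?thesis using m(1,2) by simp
qed

text \<open>For Hermitian \<open>A\<close> this is the purity \<open>Tr (A\<^sup>2)\<close>.\<close>
definition hs_norm_sq :: "complex mat \<Rightarrow> real" where
  "hs_norm_sq A = (\<Sum>r<dim_row A. \<Sum>s<dim_col A. (cmod (A $$ (r, s)))\<^sup>2)"

definition ptrace_first :: "complex mat \<Rightarrow> complex mat" where
  "ptrace_first \<rho> = mat 2 2 (\<lambda>(y, y'). \<rho> $$ (y, y') + \<rho> $$ (2 + y, 2 + y'))"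

definition ptrace_second :: "complex mat \<Rightarrow> complex mat" where
  "ptrace_second \<rho> = mat 2 2 (\<lambda>(x, x'). \<rho> $$ (2 * x, 2 * x') + \<rho> $$ (2 * x + 1, 2 * x' + 1))"

lemma hs_norm_sq_mat: "hs_norm_sq (mat n m f) = (\<Sum>r<n. \<Sum>s<m. (cmod (f (r, s)))\<^sup>2)"
  by (simp add: hs_norm_sq_def)

text \<open>Completeness of the Pauli basis: summing \<open>t\<^sub>k\<^sub>l\<^sup>2\<close> over all \<open>k, l \<in> {0..3}\<close>
  gives \<open>4 Tr (\<rho>\<^sup>2)\<close>; the terms with \<open>k = 0\<close> or \<open>l = 0\<close> are the purities of the
  marginals and \<open>t\<^sub>0\<^sub>0 = Tr \<rho>\<close>.\<close>
lemma Sval_hermitian: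
  assumes "\<rho> \<in> carrier_mat 4 4"
    and "\<And>r s. r < 4 \<Longrightarrow> s < 4 \<Longrightarrow> \<rho> $$ (s, r) = cnj (\<rho> $$ (r, s))"
  shows "Sval \<rho> = 4 * hs_norm_sq \<rho> - 2 * hs_norm_sq (ptrace_second \<rho>)
    - 2 * hs_norm_sq (ptrace_first \<rho>) + (Re (mtrace \<rho>))\<^sup>2"
proof -
  define f where "f x = \<rho> $$ x" for x
  have \<rho>: "\<rho> = mat 4 4 f"
    using assms(1) unfolding f_def by (intro eq_matI) auto
  have lower: "f (1, 0) = cnj (f (0, 1))" "f (2, 0) = cnj (f (0, 2))" "f (3, 0) = cnj (f (0, 3))"
    "f (2, 1) = cnj (f (1, 2))" "f (3, 1) = cnj (f (1, 3))" "f (3, 2) = cnj (f (2, 3))"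
    "f (Suc 0, 0) = cnj (f (0, Suc 0))" "f (3, Suc 0) = cnj (f (Suc 0, 3))"
    "f (2, Suc 0) = cnj (f (Suc 0, 2))"
    unfolding f_def by (auto intro!: assms(2))
  have diag: "Im (f (r, r)) = 0" if "r < 4" for r
    using arg_cong[OF assms(2)[OF that that], of Im] by (simp add: f_def)
  have trace: "mtrace (mat 4 4 f * kron2 X Y)
      = (\<Sum>r<4. \<Sum>s<4. f (r, s) * (X $$ (s div 2, r div 2) * Y $$ (s mod 2, r mod 2)))" for X Y
    unfolding kron2_def mat_times_mat mtrace_def by simp
  have indices: "{1..3} = {1, 2, 3 :: nat}" by auto
  have "Sval \<rho> =
    4 * (\<Sum>r<4. \<Sum>s<4. (cmod (f (r,s)))\<^sup>2)
    - 2 * ((cmod (f (0,0) + f (1,1)))\<^sup>2 + (cmod (f (0,2) + f (1,3)))\<^sup>2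
         + (cmod (f (2,0) + f (3,1)))\<^sup>2 + (cmod (f (2,2) + f (3,3)))\<^sup>2)
    - 2 * ((cmod (f (0,0) + f (2,2)))\<^sup>2 + (cmod (f (0,1) + f (2,3)))\<^sup>2
         + (cmod (f (1,0) + f (3,2)))\<^sup>2 + (cmod (f (1,1) + f (3,3)))\<^sup>2)
    + (Re (f (0,0) + f (1,1) + f (2,2) + f (3,3)))\<^sup>2"
    unfolding \<rho> Sval_def corr_def trace indices
    apply (simp add: sum_lessThan_4 sum_lessThan_2 pauli_def mat_of_rows_list_def lower diag
        cmod_power2)
    by (simp add: power2_eq_square algebra_simps)
  then show ?thesis
    unfolding \<rho> by (simp add: hs_norm_sq_mat ptrace_first_def ptrace_second_def mtrace_def
        sum_lessThan_2 sum_lessThan_4 eval_nat_numeral)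
qed

definition slice1 :: "(nat \<Rightarrow> nat \<Rightarrow> nat \<Rightarrow> complex) \<Rightarrow> nat \<Rightarrow> nat \<Rightarrow> complex" where
  "slice1 a x = (\<lambda>r. a x (r div 2) (r mod 2))"

definition slice2 :: "(nat \<Rightarrow> nat \<Rightarrow> nat \<Rightarrow> complex) \<Rightarrow> nat \<Rightarrow> nat \<Rightarrow> complex" where
  "slice2 a y = (\<lambda>r. a (r div 2) y (r mod 2))"

definition slice3 :: "(nat \<Rightarrow> nat \<Rightarrow> nat \<Rightarrow> complex) \<Rightarrow> nat \<Rightarrow> nat \<Rightarrow> complex" where
  "slice3 a z = (\<lambda>r. a (r div 2) (r mod 2) z)"

lemma flip_gram_det_slice2:
  "flip_gram_det (slice2 a 0) (slice2 a 1) = flip_gram_det (slice3 a 0) (slice3 a 1)"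
  by (simp add: flip_gram_det_def flip_form_def slice2_def slice3_def algebra_simps power2_eq_square)

lemma flip_gram_det_slice1:
  "flip_gram_det (slice1 a 0) (slice1 a 1) = flip_gram_det (slice3 a 0) (slice3 a 1)"
  by (simp add: flip_gram_det_def flip_form_def slice1_def slice3_def algebra_simps power2_eq_square)

lemma purities_rank2_density_slice3:
  fixes a :: "nat \<Rightarrow> nat \<Rightarrow> nat \<Rightarrow> complex"
  defines "\<rho> \<equiv> rank2_density (slice3 a 0) (slice3 a 1)"
  shows "4 * hs_norm_sq \<rho> - 2 * hs_norm_sq (ptrace_second \<rho>) - 2 * hs_norm_sq (ptrace_first \<rho>)
    = 2 * flip_gram_norm (slice3 a 0) (slice3 a 1) - flip_gram_norm (slice2 a 0) (slice2 a 1)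
      - flip_gram_norm (slice1 a 0) (slice1 a 1)"
proof -
  let ?L = "4 * hs_norm_sq \<rho> - 2 * hs_norm_sq (ptrace_second \<rho>) - 2 * hs_norm_sq (ptrace_first \<rho>)"
  let ?R = "2 * flip_gram_norm (slice3 a 0) (slice3 a 1) - flip_gram_norm (slice2 a 0) (slice2 a 1)
      - flip_gram_norm (slice1 a 0) (slice1 a 1)"
  have "complex_of_real ?L = complex_of_real ?R"
    unfolding \<rho>_def rank2_density_def hs_norm_sq_mat ptrace_first_def ptrace_second_def
      flip_gram_norm_def
    apply (simp only: index_mat sum_lessThan_4 sum_lessThan_2 of_real_add of_real_diff of_real_mult
        of_real_numeral complex_norm_square)
    apply (simp add: slice1_def slice2_def slice3_def flip_form_def)
    apply (simp add: algebra_simps)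
    done
  then show ?thesis by (simp only: of_real_eq_iff)
qed

lemma mtrace_rank2_density_slice3:
  "Re (mtrace (rank2_density (slice3 a 0) (slice3 a 1)))
    = (\<Sum>x<2. \<Sum>y<2. \<Sum>z<2. (cmod (a x y z))\<^sup>2)"
  unfolding cmod_power2
  by (simp add: mtrace_def rank2_density_def slice3_def sum_lessThan_4 sum_lessThan_2
      power2_eq_square algebra_simps)

lemma Sval_rank2_density_slice3:
  fixes a :: "nat \<Rightarrow> nat \<Rightarrow> nat \<Rightarrow> complex"
  shows "Sval (rank2_density (slice3 a 0) (slice3 a 1))
      - (\<Sum>x<2. \<Sum>y<2. \<Sum>z<2. (cmod (a x y z))\<^sup>2)\<^sup>2
    = 2 * (concurrence (rank2_density (slice3 a 0) (slice3 a 1)))\<^sup>2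
      - (concurrence (rank2_density (slice2 a 0) (slice2 a 1)))\<^sup>2
      - (concurrence (rank2_density (slice1 a 0) (slice1 a 1)))\<^sup>2"
proof -
  let ?\<rho> = "rank2_density (slice3 a 0) (slice3 a 1)"
  have "Sval ?\<rho> = 4 * hs_norm_sq ?\<rho> - 2 * hs_norm_sq (ptrace_second ?\<rho>)
      - 2 * hs_norm_sq (ptrace_first ?\<rho>) + (\<Sum>x<2. \<Sum>y<2. \<Sum>z<2. (cmod (a x y z))\<^sup>2)\<^sup>2"
    unfolding mtrace_rank2_density_slice3[symmetric]
    by (rule Sval_hermitian) (simp_all add: rank2_density_def)
  then have "Sval ?\<rho> - (\<Sum>x<2. \<Sum>y<2. \<Sum>z<2. (cmod (a x y z))\<^sup>2)\<^sup>2
      = 2 * flip_gram_norm (slice3 a 0) (slice3 a 1) - flip_gram_norm (slice2 a 0) (slice2 a 1)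
        - flip_gram_norm (slice1 a 0) (slice1 a 1)"
    unfolding purities_rank2_density_slice3[symmetric] by linarith
  then show ?thesis
    unfolding concurrence_sq_rank2_density flip_gram_det_slice1 flip_gram_det_slice2
    by (simp add: algebra_simps)
qed

lemma reduced_eq_rank2_density:
  "reduced psi i j k = rank2_density
     (\<lambda>r. amp psi ((\<lambda>_. 0)(i := r div 2, j := r mod 2, k := 0)))
     (\<lambda>r. amp psi ((\<lambda>_. 0)(i := r div 2, j := r mod 2, k := 1)))"
  unfolding reduced_def rank2_density_def by (simp add: sum_lessThan_2)

theorem corollary2:
  fixes psi :: "nat \<Rightarrow> nat \<Rightarrow> nat \<Rightarrow> complex" and i j k :: qubit
  assumes "normalized3 psi"
    and "i \<noteq> j" and "j \<noteq> k" and "i \<noteq> k"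
  shows "Sval (reduced psi i j k) > 1 \<longleftrightarrow>
         (concurrence (reduced psi i j k))\<^sup>2 >
           ((concurrence (reduced psi i k j))\<^sup>2 + (concurrence (reduced psi j k i))\<^sup>2) / 2"
proof -
  define a where "a x y z = amp psi ((\<lambda>_. 0)(i := x, j := y, k := z))" for x y z
  have updates: "(\<lambda>_. 0)(i := x, k := z, j := y) = (\<lambda>_. 0)(i := x, j := y, k := z)"
    "(\<lambda>_. 0)(j := y, k := z, i := x) = ((\<lambda>_. 0)(i := x, j := y, k := z) :: qubit \<Rightarrow> nat)" for x y z
    using assms(2-4) by (auto simp: fun_eq_iff)
  have "reduced psi i j k = rank2_density (slice3 a 0) (slice3 a 1)"
    by (simp add: reduced_eq_rank2_density slice3_def a_def)
  moreover have "reduced psi i k j = rank2_density (slice2 a 0) (slice2 a 1)"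
    by (simp add: reduced_eq_rank2_density slice2_def a_def updates)
  moreover have "reduced psi j k i = rank2_density (slice1 a 0) (slice1 a 1)"
    by (simp add: reduced_eq_rank2_density slice1_def a_def updates)
  moreover have "(\<Sum>x<2. \<Sum>y<2. \<Sum>z<2. (cmod (a x y z))\<^sup>2) = 1"
    using assms(1-4) unfolding a_def normalized3_def amp_def
    by (cases i; cases j; cases k) (simp_all add: sum_lessThan_2 add_ac)
  ultimately have "Sval (reduced psi i j k) - 1 = 2 * (concurrence (reduced psi i j k))\<^sup>2
      - (concurrence (reduced psi i k j))\<^sup>2 - (concurrence (reduced psi j k i))\<^sup>2"
    using Sval_rank2_density_slice3[of a] by simp
  then show ?thesis by (auto simp: field_simps)
qed

end
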